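(* For every integer $n\ge 1$, the element $$g_n=s^nas^{-n}\,t^nat^{-2n}at^n\in G$$ satisfies $d_{\mathcal A}(1,g_n)\ge 6n$. Equivalently, if $g\in G$ has normal form $g=c_{(-n,0)}c_{(0,n)}c_{(0,-n)}$ (i.e. lamplighter position $(0,0)$ and lit lamps exactly $\{(0,n),(0,-n),(-n,0)\}$), then $d_{\mathcal A}(1,g)\ge 6n$.
   Context: $G=\langle a,s,t \mid a^2=1,\ [a,a^t]=1,\ [s,t]=1,\ a^s=aa^t\rangle$, where $[x,y]=x^{-1}y^{-1}xy$ and $x^y=y^{-1}xy$. $\mathcal A=\{a,s,t,at,ta,ata,as,sa,asa\}$ and $d_{\mathcal A}$ is the word metric on $G$ with respect to $\mathcal A$. For $j\in\mathbb Z$ let $c_{(0,j)}=t^{-j}at^{j}$ and for $i<0$ let $c_{(i,0)}=s^{-i}as^{i}$; one has $g_n=c_{(-n,0)}c_{(0,-n)}c_{(0,n)}$, and these three elements commute. *)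

theory Defs
  imports Main
begin

text \<open>The group G = < a,s,t | a^2, [a,a^t], [s,t], a^s = a a^t > presented as
  words in the letters a,s,t and their inverses, modulo the congruence generated by
  free cancellation and the relators.\<close>

datatype gen = Ga | Gs | Gt

type_synonym word = "(gen \<times> bool) list"   \<comment> \<open>(x, True) = x, (x, False) = x^-1\<close>

definition wa :: word where "wa = [(Ga, True)]"
definition wai :: word where "wai = [(Ga, False)]"
definition ws :: word where "ws = [(Gs, True)]"
definition wsi :: word where "wsi = [(Gs, False)]"
definition wt :: word where "wt = [(Gt, True)]"
definition wti :: word where "wti = [(Gt, False)]"

fun winv :: "word \<Rightarrow> word" where
  "winv [] = []"
| "winv ((x, b) # w) = winv w @ [(x, \<not> b)]"

definition wpow :: "word \<Rightarrow> nat \<Rightarrow> word" where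
  "wpow w n = concat (replicate n w)"

text \<open>Relators r (relation r = 1), with [x,y] = x^-1 y^-1 x y and x^y = y^-1 x y.\<close>
definition relators :: "word set" where
  "relators = {
     wa @ wa,
     wai @ winv (wti @ wa @ wt) @ wa @ (wti @ wa @ wt),
     wsi @ wti @ ws @ wt,
     (wsi @ wa @ ws) @ winv (wa @ wti @ wa @ wt) }"

inductive eqvG :: "word \<Rightarrow> word \<Rightarrow> bool" where
  refl: "eqvG u u"
| sym: "eqvG u v \<Longrightarrow> eqvG v u"
| trans: "eqvG u v \<Longrightarrow> eqvG v w \<Longrightarrow> eqvG u w"
| ctxt: "eqvG u v \<Longrightarrow> eqvG (p @ u @ q) (p @ v @ q)"
| cancel: "eqvG [(x, b), (x, \<not> b)] []"
| rel: "r \<in> relators \<Longrightarrow> eqvG r []"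

definition genA :: "word set" where
  "genA = {wa, ws, wt, wa @ wt, wt @ wa, wa @ wt @ wa, wa @ ws, ws @ wa, wa @ ws @ wa}"

definition genAsym :: "word set" where
  "genAsym = genA \<union> winv ` genA"

definition dA1 :: "word \<Rightarrow> nat" where
  "dA1 g = (LEAST k. \<exists>us. length us = k \<and> set us \<subseteq> genAsym \<and> eqvG (concat us) g)"

definition gword :: "nat \<Rightarrow> word" where
  "gword n = wpow ws n @ wa @ wpow wsi n @ wpow wt n @ wa @ wpow wti (2 * n) @ wa @ wpow wt n"

end

(*
  Killing the generator a gives a homomorphism onto Z^2 (s and t are the unit vectors), and
  the lamps of a word w are the points of Z^2 at which it reads an a.  An F2-valued function l
  on Z^2 with l(x - e1) = l(x) + l(x - e2) is, read as a functional on lamp configurations,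
  compatible with a^s = a a^t and its translates, so the parity of the lamps of w lit on l
  is an invariant of the group element.  A product of generators from A is a walk in Z^2 with
  l1-steps of length at most 1 that lights lamps only at its vertices; hence if g_n pairs
  nontrivially with l, every such walk for g_n visits the support of l.  Parities of
  generalised binomial coefficients give an admissible l supported in y >= n, and its images
  under the symmetries of the relation x^-1 + 1 + y^-1 are supported in x >= n and
  x + y <= -n; all three pair nontrivially with g_n.  A closed walk meeting these three
  regions has length at least 6n.
*)

theory Submission
  (* Binomial_Plus comes first so that its sort constraint for gchoose, which admits int, prevails. *)
  imports "HOL.Binomial_Plus" Defs "HOL-Library.Product_Plus"
begin

fun step :: "gen \<times> bool \<Rightarrow> int \<times> int" where
  "step (Ga, _) = 0"
| "step (Gs, b) = (if b then 1 else -1, 0)"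
| "step (Gt, b) = (0, if b then 1 else -1)"

definition pos :: "word \<Rightarrow> int \<times> int" where
  "pos w = sum_list (map step w)"

lemma pos_Nil [simp]: "pos [] = 0"
  by (simp add: pos_def)

lemma pos_Cons [simp]: "pos (x # w) = step x + pos w"
  by (simp add: pos_def)

lemma pos_append [simp]: "pos (u @ v) = pos u + pos v"
  by (simp add: pos_def)

fun lamp_pairing :: "(int \<times> int \<Rightarrow> bool) \<Rightarrow> word \<Rightarrow> bool" where
  "lamp_pairing l [] = False"
| "lamp_pairing l (x # w) = ((fst x = Ga \<and> l 0) \<noteq> lamp_pairing (\<lambda>v. l (step x + v)) w)"

lemma lamp_pairing_append:
  "lamp_pairing l (u @ w) = (lamp_pairing l u \<noteq> lamp_pairing (\<lambda>v. l (pos u + v)) w)"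
  by (induction u arbitrary: l) (auto simp: add.assoc)

definition admissible :: "(int \<times> int \<Rightarrow> bool) \<Rightarrow> bool" where
  "admissible l \<longleftrightarrow> (\<forall>p q. l (p - 1, q) = (l (p, q) \<noteq> l (p, q - 1)))"

lemma admissible_shift:
  assumes "admissible l"
  shows "admissible (\<lambda>v. l (c + v))"
  unfolding admissible_def
proof (intro allI)
  fix p q
  obtain c1 c2 where c: "c = (c1, c2)" by fastforce
  have "l (c1 + p - 1, c2 + q) = (l (c1 + p, c2 + q) \<noteq> l (c1 + p, c2 + q - 1))"
    using assms unfolding admissible_def by blast
  then show "l (c + (p - 1, q)) = (l (c + (p, q)) \<noteq> l (c + (p, q - 1)))"
    by (simp add: c algebra_simps)
qed

lemma admissible_swap:
  assumes "admissible l"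
  shows "admissible (\<lambda>(p, q). l (q, p))"
  using assms unfolding admissible_def by auto

lemma admissible_rotate:
  assumes "admissible l"
  shows "admissible (\<lambda>(p, q). l (q, - p - q))"
  unfolding admissible_def prod.case
proof (intro allI)
  fix p q :: int
  have "l (q - 1, - p - q + 1) = (l (q, - p - q + 1) \<noteq> l (q, - p - q))"
    using assms unfolding admissible_def by (metis add_diff_cancel_right')
  then show "l (q, - (p - 1) - q) = (l (q, - p - q) \<noteq> l (q - 1, - p - (q - 1)))"
    by (auto simp: algebra_simps)
qed

lemma eqvG_invariants:
  "eqvG u v \<Longrightarrow> pos u = pos v \<and> (\<forall>l. admissible l \<longrightarrow> lamp_pairing l u = lamp_pairing l v)"
proof (induction rule: eqvG.induct)
  case (ctxt u v p q)
  then show ?case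
    by (simp add: lamp_pairing_append admissible_shift)
next
  case (cancel x b)
  then show ?case by (cases x) (auto simp: zero_prod_def)
next
  case (rel r)
  have relation: "l (- 1, 0) = (l (0, 0) \<noteq> l (0, - 1))" if "admissible l" for l
    using that unfolding admissible_def by (metis diff_0)
  from rel show ?case
    by (auto simp: relators_def wa_def wai_def ws_def wsi_def wt_def wti_def zero_prod_def
        dest: relation)
qed auto

(* The coefficient of y^0 in x^p y^q after the substitution x := (1 + y^-1)^-1 into F2((y^-1)),
   which kills x^-1 + 1 + y^-1. *)
fun pascal_parity :: "int \<times> int \<Rightarrow> bool" where
  "pascal_parity (p, q) \<longleftrightarrow> 0 \<le> q \<and> odd ((- p) gchoose nat q)"

lemma pascal_parity_nonneg: "pascal_parity v \<Longrightarrow> 0 \<le> snd v"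
  by (cases v) simp

lemma admissible_pascal_parity: "admissible pascal_parity"
  unfolding admissible_def
proof (intro allI)
  fix p q :: int
  consider "q \<le> 0" | "q \<ge> 1"
    by linarith
  then show "pascal_parity (p - 1, q) = (pascal_parity (p, q) \<noteq> pascal_parity (p, q - 1))"
  proof cases
    case 1
    then show ?thesis by auto
  next
    case 2
    define k where "k = nat (q - 1)"
    have "nat q = Suc k" "nat (q - 1) = k" "- (p - 1) = - p + 1"
      using 2 by (auto simp: k_def)
    then show ?thesis
      using 2 gbinomial_int_Suc_Suc[of "- p" k] by auto
  qed
qed

lemma genAsym_step_norm:
  assumes "u \<in> genAsym"
  shows "\<bar>fst (pos u)\<bar> + \<bar>snd (pos u)\<bar> \<le> 1"
  using assms by (auto simp: genAsym_def genA_def wa_def ws_def wt_def)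

lemma genAsym_lamp_pairing:
  assumes "u \<in> genAsym" "\<not> l 0" "\<not> l (pos u)"
  shows "\<not> lamp_pairing l u"
  using assms by (auto simp: genAsym_def genA_def wa_def ws_def wt_def zero_prod_def)

lemma genAsym_generates: "\<exists>us. set us \<subseteq> genAsym \<and> concat us = w"
proof
  have "[(g, b)] \<in> genAsym" for g b
    by (cases g; cases b) (auto simp: genAsym_def genA_def wa_def ws_def wt_def)
  then have "[x] \<in> genAsym" for x
    by (cases x) simp
  then show "set (map (\<lambda>x. [x]) w) \<subseteq> genAsym \<and> concat (map (\<lambda>x. [x]) w) = w"
    by auto
qed

lemma dA1_attained:
  obtains us where "length us = dA1 w" "set us \<subseteq> genAsym" "eqvG (concat us) w"
proof -
  obtain us0 where "set us0 \<subseteq> genAsym" "concat us0 = w"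
    using genAsym_generates by blast
  then have "\<exists>us. length us = length us0 \<and> set us \<subseteq> genAsym \<and> eqvG (concat us) w"
    using eqvG.refl by blast
  then have "\<exists>us. length us = dA1 w \<and> set us \<subseteq> genAsym \<and> eqvG (concat us) w"
    unfolding dA1_def by (rule LeastI)
  then show ?thesis
    using that by blast
qed

definition vertex :: "word list \<Rightarrow> nat \<Rightarrow> int \<times> int" where
  "vertex us i = pos (concat (take i us))"

lemma lamp_pairing_concat_visits:
  assumes "set us \<subseteq> genAsym" "lamp_pairing l (concat us)"
  shows "\<exists>i \<le> length us. l (vertex us i)"
  using assms
proof (induction us arbitrary: l)
  case (Cons u us)
  show ?case
  proof (cases "lamp_pairing l u")
    case True
    then have "l (vertex (u # us) 0) \<or> l (vertex (u # us) 1)"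
      using genAsym_lamp_pairing[of u l] Cons.prems(1) by (auto simp: vertex_def)
    then show ?thesis by force
  next
    case False
    then have "lamp_pairing (\<lambda>v. l (pos u + v)) (concat us)"
      using Cons.prems(2) by (simp add: lamp_pairing_append)
    then obtain i where "i \<le> length us" "l (pos u + vertex us i)"
      using Cons.IH Cons.prems(1) by auto
    then have "Suc i \<le> length (u # us)" "l (vertex (u # us) (Suc i))"
      by (auto simp: vertex_def)
    then show ?thesis by blast
  qed
qed simp

lemma vertex_step_norm:
  assumes "set us \<subseteq> genAsym" "i < length us"
  shows "\<bar>fst (vertex us (Suc i)) - fst (vertex us i)\<bar>
    + \<bar>snd (vertex us (Suc i)) - snd (vertex us i)\<bar> \<le> 1"
proof -
  have "vertex us (Suc i) = vertex us i + pos (us ! i)"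
    using assms(2) by (simp add: vertex_def take_Suc_conv_app_nth)
  moreover have "us ! i \<in> genAsym"
    using assms nth_mem by blast
  ultimately show ?thesis
    using genAsym_step_norm by simp
qed

lemma abs_diff_le_variation:
  fixes f :: "nat \<Rightarrow> 'a::ordered_ab_group_add_abs"
  assumes "i \<le> j"
  shows "\<bar>f j - f i\<bar> \<le> (\<Sum>l = i..<j. \<bar>f (Suc l) - f l\<bar>)"
proof -
  have "\<bar>f j - f i\<bar> = \<bar>\<Sum>l = i..<j. f (Suc l) - f l\<bar>"
    using sum_Suc_diff'[OF assms, of f] by simp
  also have "\<dots> \<le> (\<Sum>l = i..<j. \<bar>f (Suc l) - f l\<bar>)"
    by (rule sum_abs)
  finally show ?thesis .
qed

lemma closed_variation_ge:
  fixes f :: "nat \<Rightarrow> 'a::linordered_idom"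
  assumes "f 0 = f k" "i \<le> k" "j \<le> k"
  shows "2 * \<bar>f j - f i\<bar> \<le> (\<Sum>l<k. \<bar>f (Suc l) - f l\<bar>)"
proof -
  let ?V = "\<lambda>a b. \<Sum>l = a..<b. \<bar>f (Suc l) - f l\<bar>"
  have ordered: "2 * \<bar>f j - f i\<bar> \<le> ?V 0 k" if "i \<le> j" "j \<le> k" for i j
  proof -
    have "\<bar>f j - f i\<bar> = \<bar>(f k - f j) + (f i - f 0)\<bar>"
      using assms(1) by (simp add: abs_minus_commute algebra_simps)
    also have "\<dots> \<le> \<bar>f k - f j\<bar> + \<bar>f i - f 0\<bar>"
      by (rule abs_triangle_ineq)
    also have "\<dots> \<le> ?V j k + ?V 0 i"
      using abs_diff_le_variation that by (metis add_mono zero_le)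
    finally have around: "\<bar>f j - f i\<bar> \<le> ?V 0 i + ?V j k"
      by simp
    have between: "\<bar>f j - f i\<bar> \<le> ?V i j"
      using abs_diff_le_variation that(1) by blast
    have "?V 0 i + ?V i j + ?V j k = ?V 0 k"
      using that by (simp add: sum.atLeastLessThan_concat)
    then show ?thesis
      using add_mono[OF between around] by simp
  qed
  have "2 * \<bar>f j - f i\<bar> \<le> ?V 0 k"
    using ordered[of i j] ordered[of j i] assms(2,3) by (metis abs_minus_commute nat_le_linear)
  then show ?thesis
    by (simp add: atLeast0LessThan)
qed

lemma closed_walk_width:
  fixes P :: "nat \<Rightarrow> int \<times> int"
  assumes closed: "P 0 = P k"
    and steps: "\<And>l. l < k \<Longrightarrow> \<bar>fst (P (Suc l)) - fst (P l)\<bar> + \<bar>snd (P (Suc l)) - snd (P l)\<bar> \<le> 1"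
    and "i \<le> k" "j \<le> k" "i' \<le> k" "j' \<le> k"
  shows "2 * (\<bar>fst (P i) - fst (P j)\<bar> + \<bar>snd (P i') - snd (P j')\<bar>) \<le> int k"
proof -
  have "2 * \<bar>fst (P i) - fst (P j)\<bar> \<le> (\<Sum>l<k. \<bar>fst (P (Suc l)) - fst (P l)\<bar>)"
    using closed_variation_ge[of "\<lambda>l. fst (P l)" k j i] closed assms(3,4) by simp
  moreover have "2 * \<bar>snd (P i') - snd (P j')\<bar> \<le> (\<Sum>l<k. \<bar>snd (P (Suc l)) - snd (P l)\<bar>)"
    using closed_variation_ge[of "\<lambda>l. snd (P l)" k j' i'] closed assms(5,6) by simp
  moreover have "(\<Sum>l<k. \<bar>fst (P (Suc l)) - fst (P l)\<bar> + \<bar>snd (P (Suc l)) - snd (P l)\<bar>) \<le> (\<Sum>l<k. 1)"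
    using steps by (rule sum_mono) simp
  ultimately show ?thesis
    unfolding sum.distrib by simp
qed

lemma pos_wpow: "pos (wpow w k) = (int k * fst (pos w), int k * snd (pos w))"
  by (induction k) (auto simp: wpow_def zero_prod_def prod_eq_iff algebra_simps)

lemma lamp_pairing_without_a:
  assumes "Ga \<notin> fst ` set w"
  shows "\<not> lamp_pairing l w"
  using assms by (induction w arbitrary: l) auto

lemma lamp_pairing_wpow:
  assumes "w \<in> {ws, wsi, wt, wti}"
  shows "\<not> lamp_pairing l (wpow w k)"
  using assms by (intro lamp_pairing_without_a) (auto simp: wpow_def ws_def wsi_def wt_def wti_def)

lemma pos_gword: "pos (gword n) = 0"
  by (simp add: gword_def pos_wpow ws_def wsi_def wt_def wti_def wa_def zero_prod_def)

lemma lamp_pairing_gword: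
  "lamp_pairing l (gword n) = (l (int n, 0) \<noteq> (l (0, int n) \<noteq> l (0, - int n)))"
  by (simp add: gword_def lamp_pairing_append pos_wpow lamp_pairing_wpow
      ws_def wsi_def wt_def wti_def wa_def zero_prod_def)

lemma eqvG_lamp_pairing_visits:
  assumes "set us \<subseteq> genAsym" "eqvG (concat us) w" "admissible l" "lamp_pairing l w"
  shows "\<exists>i \<le> length us. l (vertex us i)"
  using assms lamp_pairing_concat_visits eqvG_invariants by blast

theorem mainTheorem6:
  fixes n :: nat
  assumes "n \<ge> 1"
  shows "dA1 (gword n) \<ge> 6 * n"
proof -
  obtain us where us: "length us = dA1 (gword n)" "set us \<subseteq> genAsym" "eqvG (concat us) (gword n)"
    by (rule dA1_attained)
  let ?P = "vertex us" and ?k = "length us"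
  have closed: "?P 0 = ?P ?k"
    using eqvG_invariants[OF us(3)] by (simp add: vertex_def pos_gword)
  let ?E = "\<lambda>v. pascal_parity ((0, - int n) + v)"
  have E: "admissible ?E"
    by (rule admissible_shift[OF admissible_pascal_parity])
  obtain a where a: "a \<le> ?k" "int n \<le> snd (?P a)"
    using eqvG_lamp_pairing_visits[OF us(2,3) E] assms
    by (auto simp: lamp_pairing_gword dest!: pascal_parity_nonneg)
  obtain b where b: "b \<le> ?k" "int n \<le> fst (?P b)"
    using eqvG_lamp_pairing_visits[OF us(2,3) admissible_swap[OF E]] assms
    by (auto simp: lamp_pairing_gword case_prod_beta)
  obtain c where c: "c \<le> ?k" "fst (?P c) + snd (?P c) \<le> - int n"
    using eqvG_lamp_pairing_visits[OF us(2,3) admissible_rotate[OF E]] assms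
    by (auto simp: lamp_pairing_gword case_prod_beta)
  have "2 * (\<bar>fst (?P b) - fst (?P c)\<bar> + \<bar>snd (?P a) - snd (?P c)\<bar>) \<le> int ?k"
    using closed_walk_width[OF closed vertex_step_norm[OF us(2)]] a(1) b(1) c(1) by blast
  then have "6 * int n \<le> int ?k"
    using a(2) b(2) c(2) abs_ge_self[of "fst (?P b) - fst (?P c)"]
      abs_ge_self[of "snd (?P a) - snd (?P c)"] by (smt (verit))
  then show ?thesis
    using us(1) by linarith
qed

end
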